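(* Assume Model M with $p=0$ or $p\in[1/3,1)$. Fix $t$, let $I_i^{(n)}=\mathbf{1}\{s_i^*>x_n(t)\}$, $\pi_i^{(n)}=P(I_i^{(n)}=1)$, $W_n=\sum_{i=1}^n I_i^{(n)}$ and $\lambda_n=E(W_n)=\sum_i\pi_i^{(n)}$. Then $$d_{TV}\left(\mathcal{L}(W_n),\mathrm{Poi}(\lambda_n)\right)\le\frac{1-e^{-\lambda_n}}{\lambda_n}\left(\lambda_n-\mathrm{Var}(W_n)\right)=\frac{1-e^{-\lambda_n}}{\lambda_n}\left(\sum_{i=1}^n\left(\pi_i^{(n)}\right)^2-\sum_{i\neq j}\mathrm{Cov}\left(I_i^{(n)},I_j^{(n)}\right)\right),$$ where $d_{TV}$ is the total variation distance and $\mathrm{Poi}(\lambda_n)$ the Poisson distribution with mean $\lambda_n$.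
   Context: Model M (round-robin tournament with $n$ players): for each ordered pair $i\neq j$ in $\{1,\dots,n\}$, $X_{ij}\in\{0,1/2,1\}$ is the score of player $i$ in the game against player $j$, with $X_{ij}+X_{ji}=1$; $P(X_{ij}=1/2)=p$ for all games and $P(X_{ij}=1)=P(X_{ji}=1)=(1-p)/2$; the $\binom{n}{2}$ pairs $(X_{ij},X_{ji})$, $i<j$, are mutually independent. The score of player $i$ is $s_i=\sum_{j\neq i}X_{ij}$; $s_i^*=(s_i-(n-1)/2)/\sqrt{(n-1)(1-p)/4}$. Set $a_n=(2\log n)^{-1/2}$, $b_n=(2\log n)^{1/2}-\tfrac12(2\log n)^{-1/2}(\log\log n+\log 4\pi)$, $x_n(t)=a_nt+b_n$. *)

theory Defs
  imports "HOL-Probability.Probability"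
begin

text \<open>A single game of Model M: score of the lower-indexed player.
  Draw (score 1/2) with probability p, otherwise win/loss with probability (1-p)/2 each.\<close>
definition game_pmf :: "real \<Rightarrow> real pmf" where
  "game_pmf p = bind_pmf (bernoulli_pmf p)
     (\<lambda>d. if d then return_pmf (1/2)
          else map_pmf (\<lambda>b. if b then 1 else 0) (bernoulli_pmf (1/2)))"

text \<open>Players are 0,...,n-1. An outcome assigns to every pair (i,j) with i<j<n the
  score X_ij of player i against j; the games are independent.\<close>
definition tournament_pmf :: "nat \<Rightarrow> real \<Rightarrow> (nat \<times> nat \<Rightarrow> real) pmf" where
  "tournament_pmf n p = Pi_pmf {(i, j). i < j \<and> j < n} (1/2) (\<lambda>_. game_pmf p)"

definition X :: "(nat \<times> nat \<Rightarrow> real) \<Rightarrow> nat \<Rightarrow> nat \<Rightarrow> real" where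
  "X \<omega> i j = (if i < j then \<omega> (i, j) else 1 - \<omega> (j, i))"

definition score :: "nat \<Rightarrow> (nat \<times> nat \<Rightarrow> real) \<Rightarrow> nat \<Rightarrow> real" where
  "score n \<omega> i = (\<Sum>j\<in>{..<n} - {i}. X \<omega> i j)"

definition sstar :: "nat \<Rightarrow> real \<Rightarrow> (nat \<times> nat \<Rightarrow> real) \<Rightarrow> nat \<Rightarrow> real" where
  "sstar n p \<omega> i = (score n \<omega> i - (real n - 1) / 2) / sqrt ((real n - 1) * (1 - p) / 4)"

definition a_n :: "nat \<Rightarrow> real" where
  "a_n n = (2 * ln (real n)) powr (-1/2)"

definition b_n :: "nat \<Rightarrow> real" where
  "b_n n = (2 * ln (real n)) powr (1/2)
     - 1/2 * (2 * ln (real n)) powr (-1/2) * (ln (ln (real n)) + ln (4 * pi))"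

definition x_n :: "nat \<Rightarrow> real \<Rightarrow> real" where
  "x_n n t = a_n n * t + b_n n"

definition Ind :: "nat \<Rightarrow> real \<Rightarrow> real \<Rightarrow> (nat \<times> nat \<Rightarrow> real) \<Rightarrow> nat \<Rightarrow> real" where
  "Ind n p t \<omega> i = (if sstar n p \<omega> i > x_n n t then 1 else 0)"

definition W :: "nat \<Rightarrow> real \<Rightarrow> real \<Rightarrow> (nat \<times> nat \<Rightarrow> real) \<Rightarrow> nat" where
  "W n p t \<omega> = card {i. i < n \<and> sstar n p \<omega> i > x_n n t}"

text \<open>Poisson probability mass function with mean lam (lam = 0 gives the point mass at 0).\<close>
definition poisson_mass :: "real \<Rightarrow> nat \<Rightarrow> real" where
  "poisson_mass lam k = lam ^ k / fact k * exp (- lam)"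

text \<open>Total variation distance between a distribution on nat and a probability mass
  function on nat: half the l1 distance, i.e. sup over A of |P(A) - Q(A)|.\<close>
definition dTV_nat :: "nat pmf \<Rightarrow> (nat \<Rightarrow> real) \<Rightarrow> real" where
  "dTV_nat P q = (1/2) * (\<Sum>k. \<bar>pmf P k - q k\<bar>)"

end

theory Submission
  imports Defs
begin

text \<open>The Stein--Chen method. If A is the set where the law of W exceeds \<open>Po(\<lambda>)\<close>, the total
  variation distance equals \<open>E[\<lambda> g(W+1) - W g(W)]\<close>, where g solves the Stein equation
  \<open>\<lambda> g(k+1) - k g(k) = 1{k \<in> A} - Po(\<lambda>){A}\<close>; the increments of g are at most
  \<open>(1 - exp (-\<lambda>))/\<lambda>\<close>. Writing \<open>W g(W) = \<Sum>\<^sub>i I\<^sub>i g(U\<^sub>i + 1)\<close>, with \<open>U\<^sub>i\<close> the number of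
  other indicators that hold, the bound reduces to \<open>U\<^sub>i\<close> being stochastically smaller given
  \<open>I\<^sub>i = 1\<close> than unconditionally. In a tournament, turning a game in favour of player i raises
  \<open>s\<^sub>i\<close> and lowers every other score, so Harris' inequality for the independent games gives
  exactly this.\<close>

section \<open>Poisson distribution\<close>

lemma poisson_mass_nonneg: "0 \<le> lam \<Longrightarrow> 0 \<le> poisson_mass lam k"
  by (simp add: poisson_mass_def)

lemma poisson_mass_0: "poisson_mass lam 0 = exp (- lam)"
  by (simp add: poisson_mass_def)

lemma poisson_mass_Suc: "real (Suc k) * poisson_mass lam (Suc k) = lam * poisson_mass lam k"
proof -
  have "fact (Suc k) = real (Suc k) * (fact k :: real)"
    by simp
  then show ?thesis
    unfolding poisson_mass_def by (simp del: of_nat_Suc add: field_simps)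
qed

lemma poisson_mass_sums: "poisson_mass lam sums 1"
proof -
  have "(\<lambda>k. lam ^ k /\<^sub>R fact k * exp (- lam)) sums (exp lam * exp (- lam))"
    by (intro sums_mult2 exp_converges)
  moreover have "(\<lambda>k. lam ^ k /\<^sub>R fact k * exp (- lam)) = poisson_mass lam"
    by (auto simp: poisson_mass_def fun_eq_iff divide_inverse mult.commute)
  ultimately show ?thesis
    by (simp add: exp_minus)
qed

lemma poisson_mean_sums: "(\<lambda>k. real k * poisson_mass lam k) sums lam"
proof -
  have "(\<lambda>k. real (Suc k) * poisson_mass lam (Suc k)) sums (lam * 1)"
    unfolding poisson_mass_Suc by (intro sums_mult poisson_mass_sums)
  then show ?thesis
    by (subst (asm) sums_Suc_iff) simp
qed

definition poisson_cdf :: "real \<Rightarrow> nat \<Rightarrow> real" where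
  "poisson_cdf lam k = (\<Sum>r<k. poisson_mass lam r)"

lemma mult_poisson_cdf: "lam * poisson_cdf lam k = (\<Sum>r<k. real (Suc r) * poisson_mass lam (Suc r))"
  unfolding poisson_cdf_def sum_distrib_left by (intro sum.cong refl) (metis poisson_mass_Suc)

lemma mult_poisson_cdf_le:
  assumes "0 \<le> lam"
  shows "lam * poisson_cdf lam k \<le> real k * (poisson_cdf lam (Suc k) - exp (- lam))"
proof -
  have "lam * poisson_cdf lam k \<le> (\<Sum>r<k. real k * poisson_mass lam (Suc r))"
    unfolding mult_poisson_cdf using assms
    by (intro sum_mono mult_right_mono poisson_mass_nonneg) auto
  also have "\<dots> = real k * (poisson_cdf lam (Suc k) - exp (- lam))"
    unfolding poisson_cdf_def sum.lessThan_Suc_shift poisson_mass_0 by (simp add: sum_distrib_left)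
  finally show ?thesis .
qed

lemma poisson_truncated_mean_le:
  assumes "0 \<le> lam"
  shows "(\<Sum>s\<le>k. (real s - real k) * poisson_mass lam s) \<le> lam - real k"
proof -
  define f where "f s = (real s - real k) * poisson_mass lam s" for s
  have "f sums (lam - real k * 1)"
    unfolding f_def left_diff_distrib by (intro sums_diff poisson_mean_sums sums_mult poisson_mass_sums)
  then have "summable f" and "suminf f = lam - real k"
    by (simp_all add: sums_iff)
  moreover have "0 \<le> (\<Sum>s. f (s + Suc k))"
  proof (rule suminf_nonneg)
    show "summable (\<lambda>s. f (s + Suc k))"
      using \<open>summable f\<close> by (subst summable_iff_shift)
    show "0 \<le> f (s + Suc k)" for s
      unfolding f_def using assms by (intro mult_nonneg_nonneg poisson_mass_nonneg) auto
  qed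
  ultimately show ?thesis
    using suminf_split_initial_segment[of f "Suc k"] unfolding f_def lessThan_Suc_atMost by linarith
qed

lemma poisson_cdf_tail_le:
  assumes "0 \<le> lam"
  shows "real k * (1 - poisson_cdf lam (Suc k)) \<le> lam * (1 - poisson_cdf lam k)"
proof -
  have "(\<Sum>s<Suc k. real s * poisson_mass lam s) = lam * poisson_cdf lam k"
    by (simp only: mult_poisson_cdf sum.lessThan_Suc_shift)
  then have "(\<Sum>s\<le>k. (real s - real k) * poisson_mass lam s)
      = lam * poisson_cdf lam k - real k * poisson_cdf lam (Suc k)"
    unfolding lessThan_Suc_atMost[symmetric] left_diff_distrib sum_subtractf
    by (simp only: poisson_cdf_def sum_distrib_left)
  with poisson_truncated_mean_le[OF assms, of k] show ?thesis
    by (simp add: algebra_simps)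
qed

section \<open>Solutions of the Stein equation\<close>

definition stein_weight :: "real \<Rightarrow> nat \<Rightarrow> real" where
  "stein_weight lam k = fact (k - 1) * exp lam / lam ^ k"

text \<open>Barbour and Eagleson's explicit solution for the singleton {j}.\<close>
definition stein_solution_single :: "real \<Rightarrow> nat \<Rightarrow> nat \<Rightarrow> real" where
  "stein_solution_single lam j k =
     stein_weight lam k * poisson_mass lam j * (of_bool (j < k) - poisson_cdf lam k)"

definition stein_solution :: "real \<Rightarrow> nat set \<Rightarrow> nat \<Rightarrow> real" where
  "stein_solution lam A k = (\<Sum>j\<in>A. stein_solution_single lam j k)"

lemma stein_weight_pos: "0 < lam \<Longrightarrow> 0 < stein_weight lam k"
  by (simp add: stein_weight_def)

lemma lam_mult_stein_weight_Suc: "0 < lam \<Longrightarrow> lam * stein_weight lam (Suc k) = fact k * exp lam / lam ^ k"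
  by (simp add: stein_weight_def)

lemma stein_weight_Suc:
  assumes "0 < lam" "1 \<le> k"
  shows "stein_weight lam (Suc k) = stein_weight lam k * real k / lam"
proof -
  obtain m where m: "k = Suc m"
    using assms(2) by (cases k) auto
  have "fact (Suc (Suc m)) = real (Suc (Suc m)) * (fact (Suc m) :: real)"
    by simp
  then show ?thesis
    unfolding stein_weight_def m using assms(1) by (simp add: field_simps)
qed

lemma fact_mult_poisson_mass: "0 < lam \<Longrightarrow> fact k * exp lam / lam ^ k * poisson_mass lam k = 1"
  by (simp add: poisson_mass_def field_simps exp_minus)

lemma stein_weight_mult_poisson_mass:
  assumes "0 < lam" "1 \<le> k"
  shows "stein_weight lam k * poisson_mass lam k = 1 / real k"
proof -
  obtain m where m: "k = Suc m"
    using assms(2) by (cases k) auto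
  have "fact k * exp lam / lam ^ k = real k * stein_weight lam k"
    unfolding stein_weight_def m by simp
  with fact_mult_poisson_mass[OF assms(1), of k] assms(2) show ?thesis
    by (simp add: field_simps)
qed

lemma stein_solution_single_equation:
  assumes "0 < lam"
  shows "lam * stein_solution_single lam j (Suc k) - real k * stein_solution_single lam j k
    = of_bool (k = j) - poisson_mass lam j"
proof -
  define B where "B = fact k * exp lam / lam ^ k"
  have B: "B * poisson_mass lam k = 1"
    unfolding B_def by (rule fact_mult_poisson_mass[OF assms])
  have "lam * stein_solution_single lam j (Suc k)
      = B * poisson_mass lam j * (of_bool (j < Suc k) - poisson_cdf lam (Suc k))"
    unfolding stein_solution_single_def B_def lam_mult_stein_weight_Suc[OF assms, symmetric] by simp
  moreover have "real k * stein_solution_single lam j k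
      = B * poisson_mass lam j * (of_bool (j < k) - poisson_cdf lam k)"
    by (cases k) (simp_all add: stein_solution_single_def stein_weight_def B_def poisson_cdf_def)
  moreover have "poisson_cdf lam (Suc k) = poisson_cdf lam k + poisson_mass lam k"
    by (simp add: poisson_cdf_def)
  ultimately have "lam * stein_solution_single lam j (Suc k) - real k * stein_solution_single lam j k
      = B * poisson_mass lam j * (of_bool (j < Suc k) - of_bool (j < k) - poisson_mass lam k)"
    by (simp add: algebra_simps)
  also have "\<dots> = of_bool (k = j) - poisson_mass lam j"
    using B by (cases "k = j") (auto simp: algebra_simps)
  finally show ?thesis .
qed

lemma stein_solution_equation:
  assumes "0 < lam" "finite A"
  shows "lam * stein_solution lam A (Suc k) - real k * stein_solution lam A k
    = of_bool (k \<in> A) - (\<Sum>j\<in>A. poisson_mass lam j)"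
proof -
  have "lam * stein_solution lam A (Suc k) - real k * stein_solution lam A k
      = (\<Sum>j\<in>A. of_bool (k = j) - poisson_mass lam j)"
    unfolding stein_solution_def sum_distrib_left sum_subtractf[symmetric]
    by (simp add: stein_solution_single_equation[OF assms(1)])
  also have "\<dots> = of_bool (k \<in> A) - (\<Sum>j\<in>A. poisson_mass lam j)"
    using assms(2) by (simp add: sum_subtractf)
  finally show ?thesis .
qed

lemma stein_solution_single_increment_nonpos:
  assumes "0 < lam" "1 \<le> k" "j \<noteq> k"
  shows "stein_solution_single lam j (Suc k) - stein_solution_single lam j k \<le> 0"
proof -
  have c: "0 \<le> stein_weight lam k * poisson_mass lam j / lam"
    using assms by (simp add: less_imp_le stein_weight_pos poisson_mass_nonneg)
  show ?thesis
  proof (cases "j < k")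
    case True
    have "stein_solution_single lam j (Suc k) - stein_solution_single lam j k
        = stein_weight lam k * poisson_mass lam j / lam
          * (real k * (1 - poisson_cdf lam (Suc k)) - lam * (1 - poisson_cdf lam k))"
      using assms True
      by (simp add: stein_solution_single_def stein_weight_Suc field_simps)
    also have "\<dots> \<le> 0"
      using c poisson_cdf_tail_le[of lam k] assms by (intro mult_nonneg_nonpos) auto
    finally show ?thesis .
  next
    case False
    have "stein_solution_single lam j (Suc k) - stein_solution_single lam j k
        = stein_weight lam k * poisson_mass lam j / lam
          * (lam * poisson_cdf lam k - real k * poisson_cdf lam (Suc k))"
      using assms False
      by (simp add: stein_solution_single_def stein_weight_Suc field_simps)
    also have "\<dots> \<le> 0"
    proof (rule mult_nonneg_nonpos[OF c])
      have "lam * poisson_cdf lam k \<le> real k * poisson_cdf lam (Suc k) - real k * exp (- lam)"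
        using mult_poisson_cdf_le[of lam k] assms by (simp add: right_diff_distrib)
      moreover have "0 \<le> real k * exp (- lam)"
        by simp
      ultimately show "lam * poisson_cdf lam k - real k * poisson_cdf lam (Suc k) \<le> 0"
        by linarith
    qed
    finally show ?thesis .
  qed
qed

lemma stein_solution_single_increment_diag:
  assumes "0 < lam" "1 \<le> k"
  shows "stein_solution_single lam k (Suc k) - stein_solution_single lam k k \<le> (1 - exp (- lam)) / lam"
proof -
  have "stein_solution_single lam k (Suc k) - stein_solution_single lam k k
      = stein_weight lam k * poisson_mass lam k
        * (real k / lam * (1 - poisson_cdf lam (Suc k)) + poisson_cdf lam k)"
    using assms by (simp add: stein_solution_single_def stein_weight_Suc field_simps)
  also have "\<dots> = (real k * (1 - poisson_cdf lam (Suc k)) + lam * poisson_cdf lam k) / (real k * lam)"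
    unfolding stein_weight_mult_poisson_mass[OF assms] using assms by (simp add: field_simps)
  also have "\<dots> \<le> (real k * (1 - exp (- lam))) / (real k * lam)"
    using mult_poisson_cdf_le[of lam k] assms
    by (intro divide_right_mono) (auto simp: algebra_simps)
  also have "\<dots> = (1 - exp (- lam)) / lam"
    using assms by simp
  finally show ?thesis .
qed

lemma stein_solution_increment_le:
  assumes "0 < lam" "finite A" "1 \<le> k"
  shows "stein_solution lam A (Suc k) - stein_solution lam A k \<le> (1 - exp (- lam)) / lam"
proof -
  have "stein_solution lam A (Suc k) - stein_solution lam A k
      = (\<Sum>j\<in>A. stein_solution_single lam j (Suc k) - stein_solution_single lam j k)"
    unfolding stein_solution_def by (simp add: sum_subtractf)
  also have "\<dots> \<le> (\<Sum>j\<in>A. if j = k then (1 - exp (- lam)) / lam else 0)"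
    using stein_solution_single_increment_diag stein_solution_single_increment_nonpos assms
    by (intro sum_mono) auto
  also have "\<dots> \<le> (1 - exp (- lam)) / lam"
    using assms by (simp add: sum.delta')
  finally show ?thesis .
qed

section \<open>The Stein--Chen bound\<close>

lemma dTV_nat_poisson_eq:
  assumes "set_pmf P \<subseteq> {..n}" "0 \<le> lam"
  shows "dTV_nat P (poisson_mass lam)
    = (\<Sum>k\<in>{k. k \<le> n \<and> poisson_mass lam k < pmf P k}. pmf P k - poisson_mass lam k)"
proof -
  define A where "A = {k. k \<le> n \<and> poisson_mass lam k < pmf P k}"
  define d where "d k = pmf P k - poisson_mass lam k" for k
  have "finite A"
    unfolding A_def by (rule finite_subset[of _ "{..n}"]) auto
  have "pmf P sums (\<Sum>k\<le>n. pmf P k)"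
    using assms(1) by (intro sums_finite) (auto simp: set_pmf_iff)
  then have "pmf P sums 1"
    using assms(1) by (simp add: sum_pmf_eq_1)
  then have "d sums (1 - 1)"
    unfolding d_def by (intro sums_diff poisson_mass_sums)
  moreover have "(\<lambda>k. of_bool (k \<in> A) * d k) sums (\<Sum>k\<in>A. d k)"
    using sums_finite[OF \<open>finite A\<close>, of "\<lambda>k. of_bool (k \<in> A) * d k"] by simp
  ultimately have "(\<lambda>k. 2 * (of_bool (k \<in> A) * d k) - d k) sums (2 * (\<Sum>k\<in>A. d k) - (1 - 1))"
    by (intro sums_diff sums_mult)
  moreover have "\<bar>pmf P k - poisson_mass lam k\<bar> = 2 * (of_bool (k \<in> A) * d k) - d k" for k
  proof (cases "k \<in> A")
    case False
    then have "pmf P k \<le> poisson_mass lam k"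
    proof (cases "k \<le> n")
      case False
      then have "pmf P k = 0"
        using assms(1) by (auto simp: set_pmf_iff)
      then show ?thesis
        using poisson_mass_nonneg[OF assms(2)] by simp
    qed (use \<open>k \<notin> A\<close> A_def in auto)
    with False show ?thesis
      unfolding d_def by simp
  qed (simp add: A_def d_def)
  ultimately show ?thesis
    unfolding dTV_nat_def A_def[symmetric] d_def by (simp add: sums_iff)
qed

definition count_lt :: "nat \<Rightarrow> (nat \<Rightarrow> bool) \<Rightarrow> nat" where
  "count_lt n P = card {i. i < n \<and> P i}"

lemma count_lt_eq_sum: "real (count_lt n P) = (\<Sum>i<n. of_bool (P i))"
proof -
  have "{i. i < n \<and> P i} = {..<n} \<inter> {i. P i}"
    by auto
  then show ?thesis
    unfolding count_lt_def by simp
qed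

text \<open>These simp rules would turn sums of indicators back into cardinalities.\<close>
declare sum_of_bool_eq [simp del] sum_mult_of_bool_eq [simp del] sum_of_bool_mult_eq [simp del]

lemma count_lt_le: "count_lt n P \<le> n"
proof -
  have "count_lt n P \<le> card {..<n}"
    unfolding count_lt_def by (intro card_mono) auto
  then show ?thesis
    by simp
qed

lemma count_lt_mono: "(\<And>j. j < n \<Longrightarrow> P j \<Longrightarrow> Q j) \<Longrightarrow> count_lt n P \<le> count_lt n Q"
  unfolding count_lt_def by (intro card_mono) auto

lemma count_lt_remove:
  assumes "i < n"
  shows "count_lt n P = count_lt n (\<lambda>j. j \<noteq> i \<and> P j) + of_bool (P i)"
proof (cases "P i")
  case True
  then have "{j. j < n \<and> P j} = insert i {j. j < n \<and> j \<noteq> i \<and> P j}"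
    using assms by auto
  with True show ?thesis
    unfolding count_lt_def by simp
next
  case False
  then have "{j. j < n \<and> P j} = {j. j < n \<and> j \<noteq> i \<and> P j}"
    by auto
  with False show ?thesis
    unfolding count_lt_def by simp
qed

lemma count_lt_increment_le:
  fixes g :: "nat \<Rightarrow> real"
  assumes "\<And>k. 1 \<le> k \<Longrightarrow> g (Suc k) - g k \<le> c" "i < n"
  shows "g (Suc (count_lt n P)) - g (Suc (count_lt n (\<lambda>j. j \<noteq> i \<and> P j))) \<le> c * of_bool (P i)"
  using count_lt_remove[OF assms(2), of P] assms(1) by (cases "P i") auto

lemma real_eq_sum_of_bool_less:
  assumes "u \<le> n"
  shows "real u = (\<Sum>k<n. of_bool (k < u))"
proof -
  have "(\<Sum>k<n. of_bool (k < u) :: real) = (\<Sum>k<u. 1)"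
    using assms by (intro sum.mono_neutral_cong_right) auto
  then show ?thesis
    by simp
qed

lemma telescope_of_bool_less:
  fixes h :: "nat \<Rightarrow> real"
  assumes "u \<le> n"
  shows "h u = h 0 + (\<Sum>k<n. of_bool (k < u) * (h (Suc k) - h k))"
proof -
  have "(\<Sum>k<n. of_bool (k < u) * (h (Suc k) - h k)) = (\<Sum>k<u. h (Suc k) - h k)"
    using assms by (intro sum.mono_neutral_cong_right) auto
  then show ?thesis
    by (simp add: sum_lessThan_telescope)
qed

lemma expectation_of_bool: "measure_pmf.expectation M (\<lambda>x. of_bool (P x)) = measure_pmf.prob M {x. P x}"
proof -
  have "(\<lambda>x. of_bool (P x) :: real) = indicator {x. P x}"
    by (auto simp: indicator_def)
  then show ?thesis
    by (simp add: measure_pmf.emeasure_eq_measure)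
qed

text \<open>Given \<open>I \<omega> i\<close>, the number of other indicators that hold is stochastically smaller. This
  follows from negative relation in the sense of Barbour, Holst and Janson and is all that the
  Stein--Chen bound uses.\<close>
definition negatively_related :: "'a pmf \<Rightarrow> nat \<Rightarrow> ('a \<Rightarrow> nat \<Rightarrow> bool) \<Rightarrow> bool" where
  "negatively_related M n I \<longleftrightarrow> (\<forall>i<n. \<forall>k.
     measure_pmf.prob M {\<omega>. I \<omega> i \<and> k < count_lt n (\<lambda>j. j \<noteq> i \<and> I \<omega> j)}
     \<le> measure_pmf.prob M {\<omega>. I \<omega> i} * measure_pmf.prob M {\<omega>. k < count_lt n (\<lambda>j. j \<noteq> i \<and> I \<omega> j)})"

context
  fixes M :: "'a pmf"
  assumes finite_support: "finite (set_pmf M)"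
begin

declare integrable_measure_pmf_finite[OF finite_support, simp]

lemma expectation_mult_increment_le:
  fixes A :: "'a \<Rightarrow> bool" and U :: "'a \<Rightarrow> nat" and h :: "nat \<Rightarrow> real"
  assumes U_le: "\<And>\<omega>. U \<omega> \<le> n"
    and h_increment: "\<And>k. h (Suc k) - h k \<le> c"
    and neg: "\<And>k. measure_pmf.prob M {\<omega>. A \<omega> \<and> k < U \<omega>}
                \<le> measure_pmf.prob M {\<omega>. A \<omega>} * measure_pmf.prob M {\<omega>. k < U \<omega>}"
  shows "measure_pmf.prob M {\<omega>. A \<omega>} * measure_pmf.expectation M (\<lambda>\<omega>. h (U \<omega>))
      - measure_pmf.expectation M (\<lambda>\<omega>. of_bool (A \<omega>) * h (U \<omega>))
    \<le> c * (measure_pmf.prob M {\<omega>. A \<omega>} * measure_pmf.expectation M (\<lambda>\<omega>. real (U \<omega>))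
      - measure_pmf.expectation M (\<lambda>\<omega>. of_bool (A \<omega>) * real (U \<omega>)))"
proof -
  define \<pi> where "\<pi> = measure_pmf.prob M {\<omega>. A \<omega>}"
  define p where "p k = measure_pmf.prob M {\<omega>. k < U \<omega>}" for k
  define q where "q k = measure_pmf.prob M {\<omega>. A \<omega> \<and> k < U \<omega>}" for k
  define D where "D k = h (Suc k) - h k" for k
  have tel: "h (U \<omega>) = h 0 + (\<Sum>k<n. D k * of_bool (k < U \<omega>))" for \<omega>
    using telescope_of_bool_less[OF U_le, of h] unfolding D_def by (simp add: mult.commute)
  have U_sum: "real (U \<omega>) = (\<Sum>k<n. of_bool (k < U \<omega>))" for \<omega>
    by (rule real_eq_sum_of_bool_less[OF U_le])
  have "measure_pmf.expectation M (\<lambda>\<omega>. h (U \<omega>)) = h 0 + (\<Sum>k<n. D k * p k)"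
    unfolding tel p_def by (simp add: expectation_of_bool)
  moreover have "measure_pmf.expectation M (\<lambda>\<omega>. of_bool (A \<omega>) * h (U \<omega>)) = h 0 * \<pi> + (\<Sum>k<n. D k * q k)"
    unfolding tel \<pi>_def q_def
    by (simp add: distrib_left sum_distrib_left mult.left_commute expectation_of_bool
        of_bool_conj[symmetric] del: of_bool_conj)
  moreover have "measure_pmf.expectation M (\<lambda>\<omega>. real (U \<omega>)) = (\<Sum>k<n. p k)"
    unfolding U_sum p_def by (simp add: expectation_of_bool)
  moreover have "measure_pmf.expectation M (\<lambda>\<omega>. of_bool (A \<omega>) * real (U \<omega>)) = (\<Sum>k<n. q k)"
    unfolding U_sum q_def
    by (simp add: sum_distrib_left expectation_of_bool of_bool_conj[symmetric] del: of_bool_conj)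
  moreover have "(\<Sum>k<n. D k * (\<pi> * p k - q k)) \<le> (\<Sum>k<n. c * (\<pi> * p k - q k))"
    using neg h_increment unfolding \<pi>_def p_def q_def D_def
    by (intro sum_mono mult_right_mono) (auto simp: algebra_simps)
  ultimately show ?thesis
    unfolding \<pi>_def[symmetric]
    by (simp add: algebra_simps sum_distrib_left sum_subtractf)
qed

lemma expectation_count_lt:
  "measure_pmf.expectation M (\<lambda>\<omega>. real (count_lt n (I \<omega>))) = (\<Sum>i<n. measure_pmf.prob M {\<omega>. I \<omega> i})"
  unfolding count_lt_eq_sum by (simp add: expectation_of_bool)

lemma sum_removed_count_eq_variance:
  fixes n :: nat and I :: "'a \<Rightarrow> nat \<Rightarrow> bool"
  defines "N \<equiv> \<lambda>\<omega>. real (count_lt n (I \<omega>))"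
    and "U \<equiv> \<lambda>i \<omega>. real (count_lt n (\<lambda>j. j \<noteq> i \<and> I \<omega> j))"
    and "\<pi> \<equiv> \<lambda>i. measure_pmf.prob M {\<omega>. I \<omega> i}"
  shows "(\<Sum>i<n. (\<pi> i)\<^sup>2 + \<pi> i * measure_pmf.expectation M (U i)
            - measure_pmf.expectation M (\<lambda>\<omega>. of_bool (I \<omega> i) * U i \<omega>))
    = measure_pmf.expectation M N - measure_pmf.variance M N"
proof -
  let ?E = "measure_pmf.expectation M"
  have U: "U i = (\<lambda>\<omega>. N \<omega> - of_bool (I \<omega> i))" if "i < n" for i
  proof
    fix \<omega>
    show "U i \<omega> = N \<omega> - of_bool (I \<omega> i)"
      using count_lt_remove[OF that, of "I \<omega>"] unfolding U_def N_def by simp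
  qed
  have EU: "?E (U i) = ?E N - \<pi> i" if "i < n" for i
    using U[OF that] by (simp add: \<pi>_def expectation_of_bool)
  have EIU: "?E (\<lambda>\<omega>. of_bool (I \<omega> i) * U i \<omega>) = ?E (\<lambda>\<omega>. of_bool (I \<omega> i) * N \<omega>) - \<pi> i"
    if "i < n" for i
    using U[OF that]
    by (simp add: right_diff_distrib \<pi>_def expectation_of_bool of_bool_conj[symmetric] del: of_bool_conj)
  have EIN: "(\<Sum>i<n. ?E (\<lambda>\<omega>. of_bool (I \<omega> i) * N \<omega>)) = ?E (\<lambda>\<omega>. (N \<omega>)\<^sup>2)"
  proof -
    have "N \<omega> = (\<Sum>i<n. of_bool (I \<omega> i))" for \<omega>
      unfolding N_def by (rule count_lt_eq_sum)
    then have "(\<lambda>\<omega>. (N \<omega>)\<^sup>2) = (\<lambda>\<omega>. \<Sum>i<n. of_bool (I \<omega> i) * N \<omega>)"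
      by (simp add: power2_eq_square sum_distrib_right[symmetric])
    then show ?thesis
      by simp
  qed
  have EN: "?E N = (\<Sum>i<n. \<pi> i)"
    unfolding N_def \<pi>_def by (rule expectation_count_lt)
  have "(\<Sum>i<n. (\<pi> i)\<^sup>2 + \<pi> i * ?E (U i) - ?E (\<lambda>\<omega>. of_bool (I \<omega> i) * U i \<omega>))
      = (\<Sum>i<n. \<pi> i * ?E N + \<pi> i - ?E (\<lambda>\<omega>. of_bool (I \<omega> i) * N \<omega>))"
    by (intro sum.cong refl) (simp add: EU EIU, simp add: power2_eq_square algebra_simps)
  also have "\<dots> = ?E N * ?E N + ?E N - ?E (\<lambda>\<omega>. (N \<omega>)\<^sup>2)"
    unfolding EIN[symmetric] EN by (simp add: sum.distrib sum_subtractf sum_distrib_right)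
  also have "\<dots> = ?E N - measure_pmf.variance M N"
    by (subst measure_pmf.variance_eq) (simp_all add: power2_eq_square)
  finally show ?thesis .
qed

lemma stein_summand_le:
  fixes n :: nat and I :: "'a \<Rightarrow> nat \<Rightarrow> bool" and g :: "nat \<Rightarrow> real"
  assumes neg: "negatively_related M n I"
    and g_increment: "\<And>k. 1 \<le> k \<Longrightarrow> g (Suc k) - g k \<le> c"
    and i: "i < n"
  defines "N \<equiv> \<lambda>\<omega>. count_lt n (I \<omega>)"
    and "U \<equiv> \<lambda>\<omega>. count_lt n (\<lambda>j. j \<noteq> i \<and> I \<omega> j)"
    and "\<pi> \<equiv> measure_pmf.prob M {\<omega>. I \<omega> i}"
  shows "\<pi> * measure_pmf.expectation M (\<lambda>\<omega>. g (Suc (N \<omega>)))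
      - measure_pmf.expectation M (\<lambda>\<omega>. of_bool (I \<omega> i) * g (Suc (U \<omega>)))
    \<le> c * (\<pi>\<^sup>2 + \<pi> * measure_pmf.expectation M (\<lambda>\<omega>. real (U \<omega>))
      - measure_pmf.expectation M (\<lambda>\<omega>. of_bool (I \<omega> i) * real (U \<omega>)))"
proof -
  let ?E = "measure_pmf.expectation M"
  have "?E (\<lambda>\<omega>. g (Suc (N \<omega>)) - g (Suc (U \<omega>))) \<le> ?E (\<lambda>\<omega>. c * of_bool (I \<omega> i))"
    unfolding N_def U_def using g_increment i by (intro integral_mono count_lt_increment_le) auto
  then have "\<pi> * (?E (\<lambda>\<omega>. g (Suc (N \<omega>))) - ?E (\<lambda>\<omega>. g (Suc (U \<omega>)))) \<le> \<pi> * (c * \<pi>)"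
    unfolding \<pi>_def by (intro mult_left_mono) (simp_all add: expectation_of_bool)
  moreover have "\<pi> * ?E (\<lambda>\<omega>. g (Suc (U \<omega>))) - ?E (\<lambda>\<omega>. of_bool (I \<omega> i) * g (Suc (U \<omega>)))
      \<le> c * (\<pi> * ?E (\<lambda>\<omega>. real (U \<omega>)) - ?E (\<lambda>\<omega>. of_bool (I \<omega> i) * real (U \<omega>)))"
    unfolding \<pi>_def
  proof (rule expectation_mult_increment_le)
    show "U \<omega> \<le> n" for \<omega>
      unfolding U_def by (rule count_lt_le)
    show "g (Suc (Suc k)) - g (Suc k) \<le> c" for k
      by (rule g_increment) simp
    show "measure_pmf.prob M {\<omega>. I \<omega> i \<and> k < U \<omega>}
        \<le> measure_pmf.prob M {\<omega>. I \<omega> i} * measure_pmf.prob M {\<omega>. k < U \<omega>}" for k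
      using neg i unfolding negatively_related_def U_def by blast
  qed
  ultimately show ?thesis
    by (simp add: power2_eq_square algebra_simps)
qed

lemma stein_expectation_le:
  fixes n :: nat and I :: "'a \<Rightarrow> nat \<Rightarrow> bool" and g :: "nat \<Rightarrow> real"
  assumes neg: "negatively_related M n I"
    and g_increment: "\<And>k. 1 \<le> k \<Longrightarrow> g (Suc k) - g k \<le> c"
  defines "N \<equiv> \<lambda>\<omega>. count_lt n (I \<omega>)"
  defines "lam \<equiv> measure_pmf.expectation M (\<lambda>\<omega>. real (N \<omega>))"
  shows "measure_pmf.expectation M (\<lambda>\<omega>. lam * g (Suc (N \<omega>)) - real (N \<omega>) * g (N \<omega>))
    \<le> c * (lam - measure_pmf.variance M (\<lambda>\<omega>. real (N \<omega>)))"
proof -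
  let ?E = "measure_pmf.expectation M"
  define U where "U i \<omega> = count_lt n (\<lambda>j. j \<noteq> i \<and> I \<omega> j)" for i \<omega>
  define \<pi> where "\<pi> i = measure_pmf.prob M {\<omega>. I \<omega> i}" for i
  have N_U: "N \<omega> = U i \<omega> + of_bool (I \<omega> i)" if "i < n" for i \<omega>
    unfolding N_def U_def by (rule count_lt_remove[OF that])
  have "real (N \<omega>) * g (N \<omega>) = (\<Sum>i<n. of_bool (I \<omega> i) * g (N \<omega>))" for \<omega>
    unfolding N_def count_lt_eq_sum by (rule sum_distrib_right)
  also have "\<dots> \<omega> = (\<Sum>i<n. of_bool (I \<omega> i) * g (Suc (U i \<omega>)))" for \<omega>
    using N_U by (intro sum.cong refl) auto
  finally have Ng: "real (N \<omega>) * g (N \<omega>) = (\<Sum>i<n. of_bool (I \<omega> i) * g (Suc (U i \<omega>)))" for \<omega> .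
  have lam: "lam = (\<Sum>i<n. \<pi> i)"
    unfolding lam_def N_def \<pi>_def by (rule expectation_count_lt)
  have "?E (\<lambda>\<omega>. lam * g (Suc (N \<omega>)) - real (N \<omega>) * g (N \<omega>))
      = (\<Sum>i<n. \<pi> i * ?E (\<lambda>\<omega>. g (Suc (N \<omega>))) - ?E (\<lambda>\<omega>. of_bool (I \<omega> i) * g (Suc (U i \<omega>))))"
    unfolding Ng lam by (simp add: sum_subtractf sum_distrib_right)
  also have "\<dots> \<le> (\<Sum>i<n. c * ((\<pi> i)\<^sup>2 + \<pi> i * ?E (\<lambda>\<omega>. real (U i \<omega>))
                               - ?E (\<lambda>\<omega>. of_bool (I \<omega> i) * real (U i \<omega>))))"
    using stein_summand_le[where g = g and c = c, OF neg g_increment] unfolding N_def U_def \<pi>_def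
    by (intro sum_mono) simp
  also have "\<dots> = c * (lam - measure_pmf.variance M (\<lambda>\<omega>. real (N \<omega>)))"
    unfolding sum_distrib_left[symmetric] lam_def N_def U_def \<pi>_def
    by (rule arg_cong[where f = "(*) c"], rule sum_removed_count_eq_variance)
  finally show ?thesis .
qed

lemma variance_count_lt:
  fixes n :: nat and I :: "'a \<Rightarrow> nat \<Rightarrow> bool"
  defines "\<pi> \<equiv> \<lambda>i. measure_pmf.prob M {\<omega>. I \<omega> i}"
    and "Cov \<equiv> \<lambda>i j. measure_pmf.expectation M (\<lambda>\<omega>. of_bool (I \<omega> i) * of_bool (I \<omega> j))
                     - measure_pmf.expectation M (\<lambda>\<omega>. of_bool (I \<omega> i))
                       * measure_pmf.expectation M (\<lambda>\<omega>. of_bool (I \<omega> j))"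
  shows "measure_pmf.variance M (\<lambda>\<omega>. real (count_lt n (I \<omega>)))
    = (\<Sum>i<n. \<pi> i - (\<pi> i)\<^sup>2) + (\<Sum>i<n. \<Sum>j\<in>{..<n} - {i}. Cov i j)"
proof -
  let ?E = "measure_pmf.expectation M"
  have "measure_pmf.variance M (\<lambda>\<omega>. real (count_lt n (I \<omega>)))
      = ?E (\<lambda>\<omega>. (\<Sum>i<n. of_bool (I \<omega> i))\<^sup>2) - (\<Sum>i<n. \<pi> i)\<^sup>2"
    unfolding \<pi>_def expectation_count_lt[symmetric]
    by (subst measure_pmf.variance_eq) (simp_all add: count_lt_eq_sum)
  also have "\<dots> = (\<Sum>i<n. \<Sum>j<n. Cov i j)"
    by (simp add: Cov_def \<pi>_def expectation_of_bool power2_eq_square sum_product sum_subtractf)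
  also have "\<dots> = (\<Sum>i<n. Cov i i + (\<Sum>j\<in>{..<n} - {i}. Cov i j))"
    by (intro sum.cong refl) (simp add: sum.remove)
  also have "\<dots> = (\<Sum>i<n. \<pi> i - (\<pi> i)\<^sup>2) + (\<Sum>i<n. \<Sum>j\<in>{..<n} - {i}. Cov i j)"
    by (simp add: Cov_def \<pi>_def power2_eq_square sum.distrib expectation_of_bool
        of_bool_conj[symmetric] del: of_bool_conj)
  finally show ?thesis .
qed

lemma pmf_map_le_poisson_mass_0:
  fixes N :: "'a \<Rightarrow> nat"
  assumes "measure_pmf.expectation M (\<lambda>\<omega>. real (N \<omega>)) = 0"
  shows "pmf (map_pmf N M) k \<le> poisson_mass 0 k"
proof (cases k)
  case 0
  then show ?thesis
    by (simp add: poisson_mass_def pmf_le_1)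
next
  case (Suc m)
  have "pmf (map_pmf N M) k = measure_pmf.expectation M (\<lambda>\<omega>. of_bool (N \<omega> = k))"
    by (simp add: pmf_map expectation_of_bool vimage_def)
  also have "\<dots> \<le> measure_pmf.expectation M (\<lambda>\<omega>. real (N \<omega>))"
    using Suc by (intro integral_mono) auto
  finally show ?thesis
    using assms by (simp add: poisson_mass_def Suc)
qed

theorem stein_chen_negatively_related:
  fixes n :: nat and I :: "'a \<Rightarrow> nat \<Rightarrow> bool"
  assumes neg: "negatively_related M n I"
  defines "N \<equiv> \<lambda>\<omega>. count_lt n (I \<omega>)"
  defines "lam \<equiv> measure_pmf.expectation M (\<lambda>\<omega>. real (N \<omega>))"
  shows "dTV_nat (map_pmf N M) (poisson_mass lam)
    \<le> (1 - exp (- lam)) / lam * (lam - measure_pmf.variance M (\<lambda>\<omega>. real (N \<omega>)))"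
proof -
  let ?E = "measure_pmf.expectation M"
  define A where "A = {k. k \<le> n \<and> poisson_mass lam k < pmf (map_pmf N M) k}"
  have "finite A"
    unfolding A_def by (rule finite_subset[of _ "{..n}"]) auto
  have "0 \<le> lam"
    unfolding lam_def by simp
  have "set_pmf (map_pmf N M) \<subseteq> {..n}"
    unfolding N_def by (auto simp: count_lt_le)
  then have dTV: "dTV_nat (map_pmf N M) (poisson_mass lam) = (\<Sum>k\<in>A. pmf (map_pmf N M) k - poisson_mass lam k)"
    unfolding A_def using \<open>0 \<le> lam\<close> by (rule dTV_nat_poisson_eq)
  show ?thesis
  proof (cases "lam = 0")
    case True
    have "pmf (map_pmf N M) k \<le> poisson_mass lam k" for k
      unfolding True by (rule pmf_map_le_poisson_mass_0[OF True[unfolded lam_def]])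
    then have "A = {}"
      unfolding A_def by (auto simp: not_less[symmetric])
    with dTV True show ?thesis
      by simp
  next
    case False
    with \<open>0 \<le> lam\<close> have "0 < lam"
      by simp
    define g where "g = stein_solution lam A"
    have "(\<Sum>k\<in>A. pmf (map_pmf N M) k - poisson_mass lam k)
        = ?E (\<lambda>\<omega>. of_bool (N \<omega> \<in> A) - (\<Sum>k\<in>A. poisson_mass lam k))"
      using \<open>finite A\<close>
      by (simp add: sum_subtractf measure_measure_pmf_finite[symmetric] expectation_of_bool vimage_def)
    also have "\<dots> = ?E (\<lambda>\<omega>. lam * g (Suc (N \<omega>)) - real (N \<omega>) * g (N \<omega>))"
      unfolding g_def stein_solution_equation[OF \<open>0 < lam\<close> \<open>finite A\<close>] ..
    also have "\<dots> \<le> (1 - exp (- lam)) / lam * (lam - measure_pmf.variance M (\<lambda>\<omega>. real (N \<omega>)))"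
      unfolding lam_def N_def
      by (rule stein_expectation_le[OF neg])
        (use stein_solution_increment_le[OF \<open>0 < lam\<close> \<open>finite A\<close>] in \<open>simp add: g_def lam_def N_def\<close>)
    finally show ?thesis
      using dTV by simp
  qed
qed

end

section \<open>Harris inequality for product distributions\<close>

lemma finite_set_Pi_pmf:
  assumes "finite A" "\<And>a. finite (set_pmf (q a))"
  shows "finite (set_pmf (Pi_pmf A d q))"
  using set_Pi_pmf_subset'[OF assms(1), of d q] finite_PiE_dflt[OF assms(1), of "set_pmf \<circ> q" d] assms(2)
  by (auto intro: finite_subset)

lemma expectation_Pi_pmf_insert:
  fixes h :: "('i \<Rightarrow> 'b) \<Rightarrow> real"
  assumes "finite A" "x \<notin> A" "\<And>a. finite (set_pmf (q a))"
  shows "measure_pmf.expectation (Pi_pmf (insert x A) d q) h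
       = (\<Sum>y\<in>set_pmf (q x). pmf (q x) y * measure_pmf.expectation (Pi_pmf A d q) (\<lambda>f. h (f(x := y))))"
proof -
  have "Pi_pmf (insert x A) d q = bind_pmf (q x) (\<lambda>y. map_pmf (\<lambda>f. f(x := y)) (Pi_pmf A d q))"
    unfolding Pi_pmf_insert'[OF assms(1,2)] map_pmf_def ..
  then show ?thesis
    using assms finite_set_Pi_pmf[OF assms(1,3)]
    by (simp add: pmf_expectation_bind[where A="set_pmf (q x)"])
qed

lemma weighted_chebyshev_opposite:
  fixes w F G :: "'b \<Rightarrow> real"
  assumes "finite Y" "\<And>y. y \<in> Y \<Longrightarrow> 0 \<le> w y" "sum w Y = 1"
    and "\<And>y z. y \<in> Y \<Longrightarrow> z \<in> Y \<Longrightarrow> (F y - F z) * (G y - G z) \<le> 0"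
  shows "(\<Sum>y\<in>Y. w y * (F y * G y)) \<le> (\<Sum>y\<in>Y. w y * F y) * (\<Sum>y\<in>Y. w y * G y)"
proof -
  have "(\<Sum>y\<in>Y. \<Sum>z\<in>Y. w y * w z * ((F y - F z) * (G y - G z))) \<le> 0"
    using assms by (intro sum_nonpos) (simp add: mult_nonneg_nonpos)
  moreover have "(\<Sum>y\<in>Y. \<Sum>z\<in>Y. w y * w z * ((F y - F z) * (G y - G z)))
    = 2 * (\<Sum>y\<in>Y. w y * (F y * G y)) - 2 * ((\<Sum>y\<in>Y. w y * F y) * (\<Sum>y\<in>Y. w y * G y))"
    using assms(3)
    by (simp add: algebra_simps sum.distrib sum_subtractf sum_product sum_distrib_left[symmetric]
        sum_distrib_right[symmetric] sum.swap[of _ Y Y])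
  ultimately show ?thesis
    by linarith
qed

lemma Pi_pmf_harris_inequality:
  fixes q :: "'i \<Rightarrow> real pmf" and f g :: "('i \<Rightarrow> real) \<Rightarrow> real" and \<sigma> :: "'i \<Rightarrow> real"
  assumes "finite D" "\<And>a. finite (set_pmf (q a))"
    and "\<And>r a u. a \<notin> S \<Longrightarrow> f (r(a := u)) = f r"
    and "\<And>r a u v. a \<in> S \<Longrightarrow> \<sigma> a * u \<le> \<sigma> a * v \<Longrightarrow> f (r(a := u)) \<le> f (r(a := v))"
    and "\<And>r a u v. a \<in> S \<Longrightarrow> \<sigma> a * u \<le> \<sigma> a * v \<Longrightarrow> g (r(a := v)) \<le> g (r(a := u))"
  shows "measure_pmf.expectation (Pi_pmf D d q) (\<lambda>r. f r * g r)
     \<le> measure_pmf.expectation (Pi_pmf D d q) f * measure_pmf.expectation (Pi_pmf D d q) g"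
  using assms(1,3,4,5)
proof (induction D arbitrary: f g rule: finite_induct)
  case empty
  then show ?case
    by simp
next
  case (insert x A)
  let ?E = "measure_pmf.expectation (Pi_pmf A d q)"
  define F where "F y = ?E (\<lambda>r. f (r(x := y)))" for y
  define G where "G y = ?E (\<lambda>r. g (r(x := y)))" for y
  have upd: "r(a := u, x := y) = (r(x := y))(a := u)" if "a \<noteq> x" for r :: "'i \<Rightarrow> real" and a u y
    using that by (rule fun_upd_twist)
  have IH: "?E (\<lambda>r. f (r(x := y)) * g (r(x := y))) \<le> F y * G y" for y
    unfolding F_def G_def
  proof (rule insert.IH)
    show "f (r(a := u, x := y)) = f (r(x := y))" if "a \<notin> S" for r a u
    proof (cases "a = x")
      case False
      show ?thesis
        unfolding upd[OF False] by (rule insert.prems(1)[OF that])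
    qed simp
    show "f (r(a := u, x := y)) \<le> f (r(a := v, x := y))"
      if "a \<in> S" "\<sigma> a * u \<le> \<sigma> a * v" for r a u v
    proof (cases "a = x")
      case False
      show ?thesis
        unfolding upd[OF False] by (rule insert.prems(2)[OF that])
    qed simp
    show "g (r(a := v, x := y)) \<le> g (r(a := u, x := y))"
      if "a \<in> S" "\<sigma> a * u \<le> \<sigma> a * v" for r a u v
    proof (cases "a = x")
      case False
      show ?thesis
        unfolding upd[OF False] by (rule insert.prems(3)[OF that])
    qed simp
  qed
  have opposite: "(F y - F z) * (G y - G z) \<le> 0" for y z
  proof (cases "x \<in> S")
    case False
    have "F y = F z"
      unfolding F_def insert.prems(1)[OF False] ..
    then show ?thesis
      by simp
  next
    case True
    have integrable: "integrable (measure_pmf (Pi_pmf A d q)) h" for h :: "_ \<Rightarrow> real"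
      by (rule integrable_measure_pmf_finite[OF finite_set_Pi_pmf[OF insert(1) assms(2)]])
    have mono: "F y \<le> F z" "G z \<le> G y" if "\<sigma> x * y \<le> \<sigma> x * z" for y z
      unfolding F_def G_def using integral_mono[OF integrable integrable]
      by (simp_all only: insert.prems(2,3)[OF True that])
    show ?thesis
    proof (cases "\<sigma> x * y \<le> \<sigma> x * z")
      case True
      then show ?thesis
        using mono[OF True] by (intro mult_nonpos_nonneg) auto
    next
      case False
      then show ?thesis
        using mono[of z y] by (intro mult_nonneg_nonpos) auto
    qed
  qed
  have expectation: "measure_pmf.expectation (Pi_pmf (insert x A) d q) h
       = (\<Sum>y\<in>set_pmf (q x). pmf (q x) y * ?E (\<lambda>r. h (r(x := y))))" for h
    by (rule expectation_Pi_pmf_insert[OF insert(1,2) assms(2)])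
  have "(\<Sum>y\<in>set_pmf (q x). pmf (q x) y * ?E (\<lambda>r. f (r(x := y)) * g (r(x := y))))
      \<le> (\<Sum>y\<in>set_pmf (q x). pmf (q x) y * (F y * G y))"
    by (intro sum_mono mult_left_mono IH) auto
  also have "\<dots> \<le> (\<Sum>y\<in>set_pmf (q x). pmf (q x) y * F y) * (\<Sum>y\<in>set_pmf (q x). pmf (q x) y * G y)"
    using assms(2) opposite by (intro weighted_chebyshev_opposite) (auto simp: sum_pmf_eq_1)
  finally show ?case
    unfolding expectation F_def G_def .
qed

section \<open>Scores in a random tournament\<close>

lemma finite_set_game_pmf: "finite (set_pmf (game_pmf p))"
proof -
  have "set_pmf (game_pmf p) \<subseteq> {1/2, 1, 0}"
    by (auto simp: game_pmf_def split: if_splits)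
  then show ?thesis
    by (rule finite_subset) simp
qed

lemma finite_games: "finite {(i, j). i < j \<and> j < (n::nat)}"
  by (rule finite_subset[of _ "{..<n} \<times> {..<n}"]) auto

lemma finite_set_tournament_pmf: "finite (set_pmf (tournament_pmf n p))"
  unfolding tournament_pmf_def by (intro finite_set_Pi_pmf finite_games finite_set_game_pmf)

text \<open>Raising the entry at game a helps player \<open>fst a\<close> and hurts player \<open>snd a\<close>.\<close>
definition player_sign :: "nat \<Rightarrow> nat \<times> nat \<Rightarrow> real" where
  "player_sign i a = (if fst a = i then 1 else -1)"

lemma X_fun_upd_other:
  assumes "fst a \<noteq> i" "snd a \<noteq> i"
  shows "X (r(a := u)) i j = X r i j"
proof -
  have "(i, j) \<noteq> a" "(j, i) \<noteq> a"
    using assms by auto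
  then show ?thesis
    unfolding X_def by simp
qed

lemma X_fun_upd_mono:
  assumes "fst a = i \<or> snd a = i" "player_sign i a * u \<le> player_sign i a * v" "j \<noteq> i"
  shows "X (r(a := u)) i j \<le> X (r(a := v)) i j"
proof -
  consider "a = (i, j)" | "a = (j, i)" | "(i, j) \<noteq> a" "(j, i) \<noteq> a"
    by auto
  then show ?thesis
  proof cases
    case 1
    with assms show ?thesis
      by (simp add: X_def player_sign_def)
  next
    case 2
    with assms show ?thesis
      by (simp add: X_def player_sign_def)
  qed (simp add: X_def)
qed

lemma X_fun_upd_antimono:
  assumes "fst a = i \<or> snd a = i" "player_sign i a * u \<le> player_sign i a * v" "j \<noteq> i"
  shows "X (r(a := v)) j l \<le> X (r(a := u)) j l"
proof -
  consider "a = (j, i)" "l = i" | "a = (i, j)" "l = i" | "(j, l) \<noteq> a" "(l, j) \<noteq> a"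
    using assms(1,3) by (cases a) auto
  then show ?thesis
  proof cases
    case 1
    with assms show ?thesis
      by (simp add: X_def player_sign_def)
  next
    case 2
    with assms show ?thesis
      by (simp add: X_def player_sign_def)
  qed (simp add: X_def)
qed

lemma score_fun_upd_other: "fst a \<noteq> i \<Longrightarrow> snd a \<noteq> i \<Longrightarrow> score n (r(a := u)) i = score n r i"
  unfolding score_def by (simp add: X_fun_upd_other)

lemma score_fun_upd_mono:
  "fst a = i \<or> snd a = i \<Longrightarrow> player_sign i a * u \<le> player_sign i a * v
    \<Longrightarrow> score n (r(a := u)) i \<le> score n (r(a := v)) i"
  unfolding score_def by (intro sum_mono X_fun_upd_mono) auto

lemma score_fun_upd_antimono:
  "fst a = i \<or> snd a = i \<Longrightarrow> player_sign i a * u \<le> player_sign i a * v \<Longrightarrow> j \<noteq> i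
    \<Longrightarrow> score n (r(a := v)) j \<le> score n (r(a := u)) j"
  unfolding score_def by (intro sum_mono X_fun_upd_antimono)

lemma sstar_mono:
  assumes "p \<le> 1" "1 \<le> n" "score n r i \<le> score n r' j"
  shows "sstar n p r i \<le> sstar n p r' j"
proof -
  have "0 \<le> sqrt ((real n - 1) * (1 - p) / 4)"
    using assms(1,2) by simp
  with assms(3) show ?thesis
    unfolding sstar_def by (intro divide_right_mono) auto
qed

lemma tournament_negatively_related:
  assumes "p \<le> 1"
  shows "negatively_related (tournament_pmf n p) n (\<lambda>r i. x_n n t < sstar n p r i)"
  unfolding negatively_related_def
proof (intro allI impI)
  fix i k :: nat
  assume "i < n"
  then have "1 \<le> n"
    by simp
  define I where "I r j \<longleftrightarrow> x_n n t < sstar n p r j" for r j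
  define U where "U r = count_lt n (\<lambda>j. j \<noteq> i \<and> I r j)" for r
  have "measure_pmf.expectation (tournament_pmf n p) (\<lambda>r. of_bool (I r i) * of_bool (k < U r) :: real)
    \<le> measure_pmf.expectation (tournament_pmf n p) (\<lambda>r. of_bool (I r i))
      * measure_pmf.expectation (tournament_pmf n p) (\<lambda>r. of_bool (k < U r))"
    unfolding tournament_pmf_def
  proof (rule Pi_pmf_harris_inequality[where S = "{a. fst a = i \<or> snd a = i}" and \<sigma> = "player_sign i"
        and f = "\<lambda>r. of_bool (I r i)" and g = "\<lambda>r. of_bool (k < U r)"])
    show "finite {(i, j). i < j \<and> j < n}"
      by (rule finite_games)
    show "finite (set_pmf (game_pmf p))"
      by (rule finite_set_game_pmf)
    show "of_bool (I (r(a := u)) i) = (of_bool (I r i) :: real)"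
      if "a \<notin> {a. fst a = i \<or> snd a = i}" for r a u
      using that by (simp add: I_def sstar_def score_fun_upd_other)
    show "of_bool (I (r(a := u)) i) \<le> (of_bool (I (r(a := v)) i) :: real)"
      if "a \<in> {a. fst a = i \<or> snd a = i}" "player_sign i a * u \<le> player_sign i a * v" for r a u v
    proof -
      have "sstar n p (r(a := u)) i \<le> sstar n p (r(a := v)) i"
        using that by (intro sstar_mono[OF assms \<open>1 \<le> n\<close>] score_fun_upd_mono) auto
      then show ?thesis
        by (simp add: I_def)
    qed
    show "of_bool (k < U (r(a := v))) \<le> (of_bool (k < U (r(a := u))) :: real)"
      if game: "a \<in> {a. fst a = i \<or> snd a = i}" "player_sign i a * u \<le> player_sign i a * v" for r a u v
    proof -
      have mono: "sstar n p (r(a := v)) j \<le> sstar n p (r(a := u)) j" if "j \<noteq> i" for j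
        using game that by (intro sstar_mono[OF assms \<open>1 \<le> n\<close>] score_fun_upd_antimono) auto
      have "U (r(a := v)) \<le> U (r(a := u))"
        unfolding U_def I_def
      proof (rule count_lt_mono)
        show "j \<noteq> i \<and> x_n n t < sstar n p (r(a := u)) j"
          if "j \<noteq> i \<and> x_n n t < sstar n p (r(a := v)) j" for j
          using that mono[of j] by auto
      qed
      then show ?thesis
        by simp
    qed
  qed
  then show "measure_pmf.prob (tournament_pmf n p) {r. I r i \<and> k < U r}
    \<le> measure_pmf.prob (tournament_pmf n p) {r. I r i} * measure_pmf.prob (tournament_pmf n p) {r. k < U r}"
    by (simp add: expectation_of_bool of_bool_conj[symmetric] del: of_bool_conj)
qed

theorem mainTheorem5:
  fixes n :: nat and p t :: real
  assumes "n \<ge> 2"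
    and "p = 0 \<or> (1/3 \<le> p \<and> p < 1)"
  defines "\<pi> \<equiv> (\<lambda>i. measure_pmf.prob (tournament_pmf n p) {\<omega>. Ind n p t \<omega> i = 1})"
    and "lam \<equiv> measure_pmf.expectation (tournament_pmf n p) (\<lambda>\<omega>. real (W n p t \<omega>))"
    and "VarW \<equiv> measure_pmf.variance (tournament_pmf n p) (\<lambda>\<omega>. real (W n p t \<omega>))"
    and "Cov \<equiv> (\<lambda>i j. measure_pmf.expectation (tournament_pmf n p) (\<lambda>\<omega>. Ind n p t \<omega> i * Ind n p t \<omega> j)
                     - measure_pmf.expectation (tournament_pmf n p) (\<lambda>\<omega>. Ind n p t \<omega> i)
                       * measure_pmf.expectation (tournament_pmf n p) (\<lambda>\<omega>. Ind n p t \<omega> j))"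
  shows "lam = (\<Sum>i<n. \<pi> i)
    \<and> dTV_nat (map_pmf (W n p t) (tournament_pmf n p)) (poisson_mass lam)
        \<le> (1 - exp (- lam)) / lam * (lam - VarW)
    \<and> (1 - exp (- lam)) / lam * (lam - VarW)
        = (1 - exp (- lam)) / lam *
          ((\<Sum>i<n. (\<pi> i)\<^sup>2) - (\<Sum>i<n. \<Sum>j\<in>{..<n} - {i}. Cov i j))"
proof -
  let ?M = "tournament_pmf n p"
  define I where "I \<omega> i \<longleftrightarrow> x_n n t < sstar n p \<omega> i" for \<omega> i
  have fin: "finite (set_pmf ?M)"
    by (rule finite_set_tournament_pmf)
  have W_eq: "W n p t = (\<lambda>\<omega>. count_lt n (I \<omega>))"
    by (simp add: fun_eq_iff W_def count_lt_def I_def)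
  have Ind_eq: "Ind n p t \<omega> i = of_bool (I \<omega> i)" for \<omega> i
    by (simp add: Ind_def I_def)
  have \<pi>_eq: "\<pi> i = measure_pmf.prob ?M {\<omega>. I \<omega> i}" for i
    by (simp add: \<pi>_def Ind_eq)
  have "negatively_related ?M n I"
    unfolding I_def using assms(2) by (intro tournament_negatively_related) auto
  then have "dTV_nat (map_pmf (W n p t) ?M) (poisson_mass lam) \<le> (1 - exp (- lam)) / lam * (lam - VarW)"
    unfolding lam_def VarW_def W_eq by (rule stein_chen_negatively_related[OF fin])
  moreover have "lam = (\<Sum>i<n. \<pi> i)"
    unfolding lam_def W_eq \<pi>_eq by (rule expectation_count_lt[OF fin])
  moreover have "VarW = (\<Sum>i<n. \<pi> i - (\<pi> i)\<^sup>2) + (\<Sum>i<n. \<Sum>j\<in>{..<n} - {i}. Cov i j)"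
    unfolding VarW_def W_eq \<pi>_eq Cov_def Ind_eq by (rule variance_count_lt[OF fin])
  ultimately show ?thesis
    by (simp add: sum_subtractf)
qed

end
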